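(* Let $p\in\mathbb Q\cap(2,\infty)$, write $1/p=a/b$ with $a,b\in\mathbb N$ coprime, and let $k=\lceil\log_2(b+1)\rceil$. Then $\{(u,v,t)\in\mathbb R^3_+:v^{p/(p-2)}\le tu^{2/(p-2)}\}$ equals the set of $(u,v,t)\in\mathbb R^3$ for which there exist $\boldsymbol z^i\in\mathbb R^{2^i}$, $i=1,\dots,k-1$, with $$\begin{cases}\|(v,\tfrac12(z^1_1-z^1_2))\|_2\le\tfrac12(z^1_1+z^1_2)\\ \|(z^i_j,\tfrac12(z^{i+1}_{2j-1}-z^{i+1}_{2j}))\|_2\le\tfrac12(z^{i+1}_{2j-1}+z^{i+1}_{2j}) & i=1,\dots,k-2,\ j=1,\dots,2^i\\ z^{k-1}_j\le u & j=1,\dots,a\\ z^{k-1}_j\le t & j=a+1,\dots,\lfloor b/2\rfloor\\ \|(z^{k-1}_j,\tfrac12(t-v))\|_2\le\tfrac12(t+v) & j=\lfloor b/2\rfloor+1,\dots,\lceil b/2\rceil\\ z^{k-1}_j\le v & j=\lceil b/2\rceil+1,\dots,2^{k-1}\\ \boldsymbol z^i\ge\boldsymbol0 & i=1,\dots,k-1\\ u\ge0,\ v\ge0,\ t\ge0.\end{cases}$$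
   Context: $\|\cdot\|_2$ is the Euclidean norm of the indicated 2-vector; $\mathbb R^3_+$ is the nonnegative orthant. *)

theory Defs
  imports "HOL-Analysis.Analysis"
begin

end

theory Submission
  imports Defs
begin

text \<open>Write $p = b/a$, $d = b - 2a > 0$ and $N = 2^{k-1}$. For nonnegative $u, v, t$, raising
to the power $d$ turns $v^{p/(p-2)} \le t u^{2/(p-2)}$ into the monomial inequality
$v^b \le u^{2a} t^{b-2a}$. Take $N$ leaves: $a$ copies of $u$, then copies of $t$ up to index
$\lfloor b/2 \rfloor$, one copy of $\sqrt{tv}$ if $b$ is odd, and $v$ for the rest. The square of their
product is $u^{2a} t^{b-2a} v^{2N-b}$, so the monomial inequality says exactly that $v^N$ is at most
the product of the leaves. Finally, $w^{2^n} \le L_1 \cdots L_{2^n}$ for nonnegative $L_j$ holds iff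
there is a binary tree of rotated second-order cones $z_{ij}^2 \le z_{i+1,2j-1} z_{i+1,2j}$ with
root $w$ and leaves $z_{nj} \le L_j$: squaring level by level, the product over each level
dominates the square of the product over the level above, and conversely the tree of iterated
geometric means of the leaves is a witness.\<close>

lemma norm_pair_le_half_sum_iff:
  fixes x A B :: real
  shows "norm (x, (A - B) / 2) \<le> (A + B) / 2 \<longleftrightarrow> 0 \<le> A \<and> 0 \<le> B \<and> x\<^sup>2 \<le> A * B"
proof -
  have sqrt_le_iff: "sqrt X \<le> r \<longleftrightarrow> 0 \<le> r \<and> X \<le> r\<^sup>2" if "0 \<le> X" for X r :: real
    using that real_sqrt_ge_zero[of X] sqrt_le_D[of X r] real_le_lsqrt[of r X] by linarith
  have "norm (x, (A - B) / 2) \<le> (A + B) / 2 \<longleftrightarrow>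
      0 \<le> A + B \<and> x\<^sup>2 + ((A - B) / 2)\<^sup>2 \<le> ((A + B) / 2)\<^sup>2"
    unfolding norm_Pair real_norm_def power2_abs by (subst sqrt_le_iff) simp_all
  also have "\<dots> \<longleftrightarrow> 0 \<le> A + B \<and> x\<^sup>2 \<le> A * B"
    by (simp add: power2_eq_square field_simps)
  also have "\<dots> \<longleftrightarrow> 0 \<le> A \<and> 0 \<le> B \<and> x\<^sup>2 \<le> A * B"
  proof -
    have "0 \<le> A \<and> 0 \<le> B" if "0 \<le> A + B" "x\<^sup>2 \<le> A * B"
    proof -
      have "0 \<le> A * B" using that(2) zero_le_power2[of x] by linarith
      then show ?thesis using that(1) by (auto simp: zero_le_mult_iff)
    qed
    then show ?thesis by auto
  qed
  finally show ?thesis .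
qed

lemma prod_pairs_atLeastAtMost:
  fixes f :: "nat \<Rightarrow> 'a::comm_monoid_mult"
  shows "(\<Prod>j\<in>{1..2*m}. f j) = (\<Prod>j\<in>{1..m}. f (2*j-1) * f (2*j))"
proof (induction m)
  case 0
  then show ?case by simp
next
  case (Suc m)
  have "{1..2 * Suc m} = insert (2*m+2) (insert (2*m+1) {1..2*m})" by auto
  then have "(\<Prod>j\<in>{1..2 * Suc m}. f j) = (\<Prod>j\<in>{1..2*m}. f j) * (f (2*m+1) * f (2*m+2))"
    by (simp add: ac_simps)
  then show ?case
    using Suc by (simp add: atLeastAtMostSuc_conv ac_simps)
qed

lemma prod_atLeastAtMost_split:
  fixes f :: "nat \<Rightarrow> 'a::comm_monoid_mult"
  assumes "l \<le> m + 1" "m \<le> n"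
  shows "(\<Prod>j\<in>{l..n}. f j) = (\<Prod>j\<in>{l..m}. f j) * (\<Prod>j\<in>{m+1..n}. f j)"
  using prod.ub_add_nat[OF assms(1), of f "n - m"] assms(2) by simp

lemma dyadic_tree_root_power_le:
  fixes z :: "nat \<Rightarrow> nat \<Rightarrow> real"
  assumes root: "0 \<le> z 0 1"
    and node: "\<And>i j. i < n \<Longrightarrow> j \<in> {1..2^i} \<Longrightarrow>
                 (z i j)\<^sup>2 \<le> z (Suc i) (2*j-1) * z (Suc i) (2*j)"
  shows "z 0 1 ^ 2^n \<le> (\<Prod>j\<in>{1..2^n}. z n j)"
proof -
  have "z 0 1 ^ 2^m \<le> (\<Prod>j\<in>{1..2^m}. z m j)" if "m \<le> n" for m
    using that
  proof (induction m)
    case 0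
    then show ?case by simp
  next
    case (Suc m)
    have "z 0 1 ^ 2^Suc m = (z 0 1 ^ 2^m)\<^sup>2"
      by (simp add: power_mult[symmetric] mult.commute)
    also have "\<dots> \<le> (\<Prod>j\<in>{1..2^m}. z m j)\<^sup>2"
      using Suc root by (intro power_mono) auto
    also have "\<dots> = (\<Prod>j\<in>{1..2^m}. (z m j)\<^sup>2)"
      by (rule prod_power_distrib)
    also have "\<dots> \<le> (\<Prod>j\<in>{1..2^m}. z (Suc m) (2*j-1) * z (Suc m) (2*j))"
      using Suc node by (intro prod_mono) auto
    also have "\<dots> = (\<Prod>j\<in>{1..2^Suc m}. z (Suc m) j)"
      using prod_pairs_atLeastAtMost[of "z (Suc m)" "2^m"] by simp
    finally show ?case .
  qed
  then show ?thesis by simp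
qed

lemma dyadic_tree_root_power_eq:
  fixes z :: "nat \<Rightarrow> nat \<Rightarrow> real"
  assumes node: "\<And>i j. i < n \<Longrightarrow> j \<in> {1..2^i} \<Longrightarrow>
                 (z i j)\<^sup>2 = z (Suc i) (2*j-1) * z (Suc i) (2*j)"
  shows "z 0 1 ^ 2^n = (\<Prod>j\<in>{1..2^n}. z n j)"
proof -
  have "z 0 1 ^ 2^m = (\<Prod>j\<in>{1..2^m}. z m j)" if "m \<le> n" for m
    using that
  proof (induction m)
    case 0
    then show ?case by simp
  next
    case (Suc m)
    have "z 0 1 ^ 2^Suc m = (z 0 1 ^ 2^m)\<^sup>2"
      by (simp add: power_mult[symmetric] mult.commute)
    also have "\<dots> = (\<Prod>j\<in>{1..2^m}. (z m j)\<^sup>2)"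
      using Suc by (simp add: prod_power_distrib)
    also have "\<dots> = (\<Prod>j\<in>{1..2^m}. z (Suc m) (2*j-1) * z (Suc m) (2*j))"
      using Suc node by (intro prod.cong) auto
    also have "\<dots> = (\<Prod>j\<in>{1..2^Suc m}. z (Suc m) j)"
      using prod_pairs_atLeastAtMost[of "z (Suc m)" "2^m"] by simp
    finally show ?case .
  qed
  then show ?thesis by simp
qed

text \<open>Node \<open>j\<close> at height \<open>h\<close> is the geometric mean of the leaves \<open>2^h*(j-1)+1, ..., 2^h*j\<close>.\<close>

fun geometric_mean_tree :: "(nat \<Rightarrow> real) \<Rightarrow> nat \<Rightarrow> nat \<Rightarrow> real" where
  "geometric_mean_tree L 0 j = L j"
| "geometric_mean_tree L (Suc h) j =
     sqrt (geometric_mean_tree L h (2*j-1) * geometric_mean_tree L h (2*j))"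

lemma geometric_mean_tree_nonneg: "(\<And>j. 0 \<le> L j) \<Longrightarrow> 0 \<le> geometric_mean_tree L h j"
  by (induction h arbitrary: j) auto

lemma geometric_mean_tree_power:
  assumes "\<And>j. 0 \<le> L j"
  shows "geometric_mean_tree L n 1 ^ 2^n = (\<Prod>j\<in>{1..2^n}. L j)"
proof -
  let ?z = "\<lambda>i. geometric_mean_tree L (n - i)"
  have "(?z i j)\<^sup>2 = ?z (Suc i) (2*j-1) * ?z (Suc i) (2*j)" if "i < n" for i j
  proof -
    have "n - i = Suc (n - Suc i)" using that by simp
    then show ?thesis
      using geometric_mean_tree_nonneg[OF assms] by simp
  qed
  then have "?z 0 1 ^ 2^n = (\<Prod>j\<in>{1..2^n}. ?z n j)"
    by (intro dyadic_tree_root_power_eq)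
  then show ?thesis by simp
qed

definition cone_tree :: "nat \<Rightarrow> (nat \<Rightarrow> real) \<Rightarrow> (nat \<Rightarrow> nat \<Rightarrow> real) \<Rightarrow> bool" where
  "cone_tree n L z \<longleftrightarrow>
     (\<forall>i<n. \<forall>j\<in>{1..2^i}. (z i j)\<^sup>2 \<le> z (Suc i) (2*j-1) * z (Suc i) (2*j))
   \<and> (\<forall>i\<le>n. \<forall>j\<in>{1..2^i}. 0 \<le> z i j)
   \<and> (\<forall>j\<in>{1..2^n}. z n j \<le> L j)"

lemma power_le_prod_iff_cone_tree:
  fixes w :: real and L :: "nat \<Rightarrow> real"
  assumes w: "0 \<le> w" and L: "\<And>j. 0 \<le> L j"
  shows "w ^ 2^n \<le> (\<Prod>j\<in>{1..2^n}. L j) \<longleftrightarrow> (\<exists>z. z 0 1 = w \<and> cone_tree n L z)"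
proof
  assume le: "w ^ 2^n \<le> (\<Prod>j\<in>{1..2^n}. L j)"
  let ?M = "geometric_mean_tree L"
  define z where "z i j = (if i = 0 then w else ?M (n - i) j)" for i j
  have M: "\<And>h j. 0 \<le> ?M h j"
    using geometric_mean_tree_nonneg[OF L] .
  have "w ^ 2^n \<le> ?M n 1 ^ 2^n"
    using le geometric_mean_tree_power[of L n] L by simp
  then have root: "w \<le> ?M n 1"
    using w M power_mono_iff[of w "?M n 1" "2^n"] by simp
  have node: "(z i j)\<^sup>2 \<le> z (Suc i) (2*j-1) * z (Suc i) (2*j)"
    if "i < n" "j \<in> {1..2^i}" for i j
  proof -
    have "n - i = Suc (n - Suc i)"
      using that by simp
    then have "z (Suc i) (2*j-1) * z (Suc i) (2*j) = (?M (n - i) j)\<^sup>2"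
      using M by (simp add: z_def)
    then show ?thesis
      using that root w by (cases "i = 0") (auto simp: z_def intro: power_mono)
  qed
  have leaf: "z n j \<le> L j" if "j \<in> {1..2^n}" for j
    using that le by (cases "n = 0") (auto simp: z_def)
  have "z 0 1 = w \<and> cone_tree n L z"
    using node leaf w M by (auto simp: z_def cone_tree_def)
  then show "\<exists>z. z 0 1 = w \<and> cone_tree n L z" by blast
next
  assume "\<exists>z. z 0 1 = w \<and> cone_tree n L z"
  then obtain z where z: "z 0 1 = w" "cone_tree n L z" by blast
  then have "z 0 1 ^ 2^n \<le> (\<Prod>j\<in>{1..2^n}. z n j)"
    using w by (intro dyadic_tree_root_power_le) (auto simp: cone_tree_def)
  then have "w ^ 2^n \<le> (\<Prod>j\<in>{1..2^n}. z n j)"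
    using z(1) by simp
  also have "\<dots> \<le> (\<Prod>j\<in>{1..2^n}. L j)"
    using z(2) by (intro prod_mono) (auto simp: cone_tree_def)
  finally show "w ^ 2^n \<le> (\<Prod>j\<in>{1..2^n}. L j)" .
qed

definition cone_leaf :: "nat \<Rightarrow> nat \<Rightarrow> real \<Rightarrow> real \<Rightarrow> real \<Rightarrow> nat \<Rightarrow> real" where
  "cone_leaf a b u v t j =
     (if j \<le> a then u else if j \<le> b div 2 then t else if j \<le> (b+1) div 2 then sqrt (t * v) else v)"

lemma cone_leaf_nonneg: "0 \<le> u \<Longrightarrow> 0 \<le> v \<Longrightarrow> 0 \<le> t \<Longrightarrow> 0 \<le> cone_leaf a b u v t j"
  by (simp add: cone_leaf_def)

lemma leaf_constraints_iff_le_cone_leaf: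
  fixes y :: "nat \<Rightarrow> real"
  assumes "2*a \<le> b" "b \<le> 2*N" "0 \<le> v" "0 \<le> t" "\<And>j. j \<in> {1..N} \<Longrightarrow> 0 \<le> y j"
  shows "(\<forall>j\<in>{1..a}. y j \<le> u) \<and> (\<forall>j\<in>{a+1..b div 2}. y j \<le> t)
       \<and> (\<forall>j\<in>{b div 2 + 1..(b+1) div 2}. norm (y j, (t - v) / 2) \<le> (t + v) / 2)
       \<and> (\<forall>j\<in>{(b+1) div 2 + 1..N}. y j \<le> v)
     \<longleftrightarrow> (\<forall>j\<in>{1..N}. y j \<le> cone_leaf a b u v t j)"
proof -
  let ?h = "b div 2" and ?c = "(b+1) div 2" and ?l = "cone_leaf a b u v t"
  have sqrt_cone: "norm (y j, (t - v) / 2) \<le> (t + v) / 2 \<longleftrightarrow> y j \<le> sqrt (t * v)"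
    if "j \<in> {1..N}" for j
  proof -
    have y: "0 \<le> y j" and tv: "0 \<le> t * v"
      using assms that by auto
    have "y j \<le> sqrt (t * v) \<longleftrightarrow> (y j)\<^sup>2 \<le> t * v"
      using power_mono[OF _ y, of "sqrt (t * v)" 2] real_le_rsqrt[of "y j" "t * v"] tv by auto
    then show ?thesis
      unfolding norm_pair_le_half_sum_iff using assms by simp
  qed
  show ?thesis
  proof
    assume H: "(\<forall>j\<in>{1..a}. y j \<le> u) \<and> (\<forall>j\<in>{a+1..?h}. y j \<le> t)
       \<and> (\<forall>j\<in>{?h + 1..?c}. norm (y j, (t - v) / 2) \<le> (t + v) / 2)
       \<and> (\<forall>j\<in>{?c + 1..N}. y j \<le> v)"
    show "\<forall>j\<in>{1..N}. y j \<le> ?l j"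
    proof
      fix j assume j: "j \<in> {1..N}"
      consider "j \<le> a" | "a < j" "j \<le> ?h" | "?h < j" "j \<le> ?c" | "?c < j"
        by linarith
      then show "y j \<le> ?l j"
        by cases (use H j sqrt_cone[OF j] in \<open>auto simp: cone_leaf_def\<close>)
    qed
  next
    assume "\<forall>j\<in>{1..N}. y j \<le> ?l j"
    then have H: "y j \<le> ?l j" if "1 \<le> j" "j \<le> N" for j
      using that by auto
    have ord: "a \<le> ?h" "?h \<le> ?c" "?c \<le> N"
      using assms by auto
    show "(\<forall>j\<in>{1..a}. y j \<le> u) \<and> (\<forall>j\<in>{a+1..?h}. y j \<le> t)
       \<and> (\<forall>j\<in>{?h + 1..?c}. norm (y j, (t - v) / 2) \<le> (t + v) / 2)
       \<and> (\<forall>j\<in>{?c + 1..N}. y j \<le> v)"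
    proof (intro conjI ballI)
      fix j assume "j \<in> {1..a}"
      then show "y j \<le> u" using ord H[of j] by (auto simp: cone_leaf_def)
    next
      fix j assume "j \<in> {a+1..?h}"
      then show "y j \<le> t" using ord H[of j] by (auto simp: cone_leaf_def)
    next
      fix j assume j: "j \<in> {?h+1..?c}"
      then have "y j \<le> sqrt (t * v)" using ord H[of j] by (auto simp: cone_leaf_def)
      then show "norm (y j, (t - v) / 2) \<le> (t + v) / 2" using sqrt_cone[of j] j ord by simp
    next
      fix j assume j: "j \<in> {?c+1..N}"
      then have "\<not> j \<le> a" "\<not> j \<le> ?h" "\<not> j \<le> ?c" "1 \<le> j" "j \<le> N"
        using ord by auto
      then show "y j \<le> v" using H[of j] by (simp add: cone_leaf_def)
    qed
  qed
qed

lemma prod_cone_leaf_squared: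
  assumes "2*a \<le> b" "b \<le> 2*N" "0 \<le> v" "0 \<le> t"
  shows "(\<Prod>j\<in>{1..N}. cone_leaf a b u v t j)\<^sup>2 = u^(2*a) * t^(b - 2*a) * v^(2*N - b)"
proof -
  let ?h = "b div 2" and ?c = "(b+1) div 2" and ?l = "\<lambda>j. (cone_leaf a b u v t j)\<^sup>2"
  have "(\<Prod>j\<in>{1..N}. cone_leaf a b u v t j)\<^sup>2 = (\<Prod>j\<in>{1..N}. ?l j)"
    by (rule prod_power_distrib)
  also have "\<dots> = (\<Prod>j\<in>{1..a}. ?l j) * (\<Prod>j\<in>{a+1..?h}. ?l j)
      * (\<Prod>j\<in>{?h+1..?c}. ?l j) * (\<Prod>j\<in>{?c+1..N}. ?l j)"
  proof -
    have "a \<le> ?h" "?h \<le> ?c" "?c \<le> N"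
      using assms by auto
    then show ?thesis
      using prod_atLeastAtMost_split[of 1 ?c N ?l] prod_atLeastAtMost_split[of 1 ?h ?c ?l]
        prod_atLeastAtMost_split[of 1 a ?h ?l]
      by simp
  qed
  also have "\<dots> = (u\<^sup>2)^a * (t\<^sup>2)^(?h - a) * (t * v)^(?c - ?h) * (v\<^sup>2)^(N - ?c)"
  proof -
    have "(\<Prod>j\<in>{1..a}. ?l j) = (\<Prod>j\<in>{1..a}. u\<^sup>2)"
      "(\<Prod>j\<in>{a+1..?h}. ?l j) = (\<Prod>j\<in>{a+1..?h}. t\<^sup>2)"
      "(\<Prod>j\<in>{?h+1..?c}. ?l j) = (\<Prod>j\<in>{?h+1..?c}. t * v)"
      "(\<Prod>j\<in>{?c+1..N}. ?l j) = (\<Prod>j\<in>{?c+1..N}. v\<^sup>2)"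
      using assms by (intro prod.cong; auto simp: cone_leaf_def)+
    then show ?thesis by simp
  qed
  also have "\<dots> = u^(2*a) * t^(2*(?h - a) + (?c - ?h)) * v^((?c - ?h) + 2*(N - ?c))"
    unfolding power_add power_mult power_mult_distrib by (simp add: ac_simps)
  also have "\<dots> = u^(2*a) * t^(b - 2*a) * v^(2*N - b)"
  proof -
    have "2*(?h - a) + (?c - ?h) = b - 2*a" "(?c - ?h) + 2*(N - ?c) = 2*N - b"
      using assms by simp_all
    then show ?thesis by (simp only:)
  qed
  finally show ?thesis .
qed

lemma power_le_prod_cone_leaf_iff:
  assumes u: "0 \<le> u" and v: "0 \<le> v" and t: "0 \<le> t"
    and ab: "2*a \<le> b" "b \<le> 2*N" "0 < b"
  shows "v^N \<le> (\<Prod>j\<in>{1..N}. cone_leaf a b u v t j) \<longleftrightarrow> v^b \<le> u^(2*a) * t^(b - 2*a)"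
proof -
  let ?P = "\<Prod>j\<in>{1..N}. cone_leaf a b u v t j" and ?m = "u^(2*a) * t^(b - 2*a)"
  have "0 \<le> ?P"
    using cone_leaf_nonneg[OF u v t] by (simp add: prod_nonneg)
  then have "v^N \<le> ?P \<longleftrightarrow> (v^N)\<^sup>2 \<le> ?P\<^sup>2"
    using v by (simp add: power_mono_iff)
  also have "\<dots> \<longleftrightarrow> v^b * v^(2*N - b) \<le> ?m * v^(2*N - b)"
  proof -
    have "(v^N)\<^sup>2 = v^b * v^(2*N - b)"
      using ab by (simp add: power_mult[symmetric] mult.commute flip: power_add)
    moreover have "?P\<^sup>2 = ?m * v^(2*N - b)"
      by (rule prod_cone_leaf_squared[OF ab(1,2) v t])
    ultimately show ?thesis by simp
  qed
  also have "\<dots> \<longleftrightarrow> v^b \<le> ?m"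
  proof (cases "v = 0")
    case True
    then show ?thesis using ab u t by (simp add: zero_power)
  next
    case False
    then show ?thesis using v by simp
  qed
  finally show ?thesis .
qed

lemma powr_le_powr_iff:
  fixes x y e :: real
  assumes "0 < e" "0 \<le> x" "0 \<le> y"
  shows "x powr e \<le> y powr e \<longleftrightarrow> x \<le> y"
  using assms by (meson less_imp_le not_le powr_less_mono2 powr_mono2)

lemma powr_cone_iff_monomial_le:
  fixes u v t p :: real
  assumes u: "0 \<le> u" and v: "0 \<le> v" and t: "0 \<le> t"
    and ab: "0 < a" "2*a < b" and p: "p = real b / real a"
  shows "v powr (p / (p - 2)) \<le> t * u powr (2 / (p - 2)) \<longleftrightarrow> v^b \<le> u^(2*a) * t^(b - 2*a)"
proof -
  define d where "d = real (b - 2*a)"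
  have d: "0 < d" "d = real b - 2 * real a"
    using ab by (auto simp: d_def)
  have "p / (p - 2) = real b / d" "2 / (p - 2) = 2 * real a / d"
    using ab unfolding p d(2) by (simp_all add: field_simps)
  moreover have "(v powr (real b / d)) powr d = v^b"
    using d v by (simp add: powr_powr powr_realpow')
  moreover have "(t * u powr (2 * real a / d)) powr d = u^(2*a) * t^(b - 2*a)"
  proof -
    have "t powr d = t^(b - 2*a)"
      using t ab unfolding d_def by (intro powr_realpow') auto
    moreover have "u powr (2 * real a) = u^(2*a)"
      using u ab powr_realpow'[of u "2*a"] by simp
    ultimately show ?thesis
      using d u t by (simp add: powr_mult powr_powr)
  qed
  ultimately show ?thesis
    using powr_le_powr_iff[OF d(1), of "v powr (real b / d)" "t * u powr (2 * real a / d)"] u t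
    by simp
qed

text \<open>The constraint system of the theorem: a cone tree of depth \<open>k-1\<close> whose root \<open>v\<close> is kept
outside \<open>z\<close>, so that level 0 of \<open>z\<close> is unused.\<close>

definition soc_system ::
    "nat \<Rightarrow> nat \<Rightarrow> nat \<Rightarrow> real \<Rightarrow> real \<Rightarrow> real \<Rightarrow> (nat \<Rightarrow> nat \<Rightarrow> real) \<Rightarrow> bool" where
  "soc_system k a b u v t z \<longleftrightarrow>
            norm (v, (z 1 1 - z 1 2) / 2) \<le> (z 1 1 + z 1 2) / 2
          \<and> (\<forall>i\<in>{1..k-2}. \<forall>j\<in>{1..2^i}.
               norm (z i j, (z (i+1) (2*j-1) - z (i+1) (2*j)) / 2)
                 \<le> (z (i+1) (2*j-1) + z (i+1) (2*j)) / 2)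
          \<and> (\<forall>j\<in>{1..a}. z (k-1) j \<le> u)
          \<and> (\<forall>j\<in>{a+1..b div 2}. z (k-1) j \<le> t)
          \<and> (\<forall>j\<in>{b div 2 + 1..(b+1) div 2}. norm (z (k-1) j, (t - v) / 2) \<le> (t + v) / 2)
          \<and> (\<forall>j\<in>{(b+1) div 2 + 1..2^(k-1)}. z (k-1) j \<le> v)
          \<and> (\<forall>i\<in>{1..k-1}. \<forall>j\<in>{1..2^i}. z i j \<ge> 0)
          \<and> u \<ge> 0 \<and> v \<ge> 0 \<and> t \<ge> 0"

lemma soc_system_imp_cone_tree:
  assumes n: "0 < n" and ab: "2*a \<le> b" "b \<le> 2 * 2^n"
    and z: "soc_system (Suc n) a b u v t z"
  shows "cone_tree n (cone_leaf a b u v t) (z(0 := (\<lambda>_. v)))"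
proof -
  let ?z = "z(0 := (\<lambda>_. v))"
  have nonneg: "0 \<le> z i j" if "1 \<le> i" "i \<le> n" "j \<in> {1..2^i}" for i j
    using z that by (auto simp: soc_system_def)
  have "(?z i j)\<^sup>2 \<le> ?z (Suc i) (2*j-1) * ?z (Suc i) (2*j)" if "i < n" "j \<in> {1..2^i}" for i j
  proof (cases "i = 0")
    case True
    have "norm (v, (z 1 1 - z 1 2) / 2) \<le> (z 1 1 + z 1 2) / 2"
      using z unfolding soc_system_def by blast
    then show ?thesis
      using True that unfolding norm_pair_le_half_sum_iff by auto
  next
    case False
    then have "norm (z i j, (z (i+1) (2*j-1) - z (i+1) (2*j)) / 2)
                 \<le> (z (i+1) (2*j-1) + z (i+1) (2*j)) / 2"
      using z that by (auto simp: soc_system_def)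
    then show ?thesis
      using False unfolding norm_pair_le_half_sum_iff by simp
  qed
  moreover have "\<forall>j\<in>{1..2^n}. z n j \<le> cone_leaf a b u v t j"
    using z n ab nonneg
    by (subst leaf_constraints_iff_le_cone_leaf[symmetric]) (auto simp: soc_system_def)
  ultimately show ?thesis
    using n z nonneg by (auto simp: cone_tree_def soc_system_def)
qed

lemma cone_tree_imp_soc_system:
  assumes n: "0 < n" and ab: "2*a \<le> b" "b \<le> 2 * 2^n"
    and uvt: "0 \<le> u" "0 \<le> v" "0 \<le> t"
    and z: "z 0 1 = v" "cone_tree n (cone_leaf a b u v t) z"
  shows "soc_system (Suc n) a b u v t z"
proof -
  have nonneg: "\<forall>i\<le>n. \<forall>j\<in>{1..2^i}. 0 \<le> z i j"
    and node: "\<forall>i<n. \<forall>j\<in>{1..2^i}. (z i j)\<^sup>2 \<le> z (Suc i) (2*j-1) * z (Suc i) (2*j)"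
    and leaf: "\<forall>j\<in>{1..2^n}. z n j \<le> cone_leaf a b u v t j"
    using z(2) by (auto simp: cone_tree_def)
  have children_nonneg: "0 \<le> z (Suc i) (2*j-1)" "0 \<le> z (Suc i) (2*j)"
    if "i < n" "j \<in> {1..2^i}" for i j
  proof -
    have "2*j - 1 \<in> {1..2^Suc i}" "2*j \<in> {1..2^Suc i}" "Suc i \<le> n"
      using that by auto
    then show "0 \<le> z (Suc i) (2*j-1)" "0 \<le> z (Suc i) (2*j)"
      using nonneg by blast+
  qed
  have "norm (v, (z 1 1 - z 1 2) / 2) \<le> (z 1 1 + z 1 2) / 2"
    unfolding norm_pair_le_half_sum_iff
    using node n z(1) children_nonneg[of 0 1] by auto
  moreover have "\<forall>i\<in>{1..n-1}. \<forall>j\<in>{1..2^i}.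
               norm (z i j, (z (i+1) (2*j-1) - z (i+1) (2*j)) / 2)
                 \<le> (z (i+1) (2*j-1) + z (i+1) (2*j)) / 2"
    unfolding norm_pair_le_half_sum_iff using node children_nonneg by auto
  moreover have "(\<forall>j\<in>{1..a}. z n j \<le> u) \<and> (\<forall>j\<in>{a+1..b div 2}. z n j \<le> t)
       \<and> (\<forall>j\<in>{b div 2 + 1..(b+1) div 2}. norm (z n j, (t - v) / 2) \<le> (t + v) / 2)
       \<and> (\<forall>j\<in>{(b+1) div 2 + 1..2^n}. z n j \<le> v)"
    using ab uvt nonneg leaf by (subst leaf_constraints_iff_le_cone_leaf) auto
  moreover have "Suc n - 1 = n" "Suc n - 2 = n - 1"
    by simp_all
  ultimately show ?thesis
    unfolding soc_system_def using nonneg uvt by auto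
qed

lemma exists_soc_system_iff:
  assumes n: "0 < n" and ab: "2*a \<le> b" "b \<le> 2 * 2^n" "0 < b"
  shows "(\<exists>z. soc_system (Suc n) a b u v t z) \<longleftrightarrow>
    0 \<le> u \<and> 0 \<le> v \<and> 0 \<le> t \<and> v^b \<le> u^(2*a) * t^(b - 2*a)"
proof (cases "0 \<le> u \<and> 0 \<le> v \<and> 0 \<le> t")
  case True
  then have uvt: "0 \<le> u" "0 \<le> v" "0 \<le> t" by auto
  have "v^b \<le> u^(2*a) * t^(b - 2*a) \<longleftrightarrow> v ^ 2^n \<le> (\<Prod>j\<in>{1..2^n}. cone_leaf a b u v t j)"
    using power_le_prod_cone_leaf_iff[OF uvt ab] by simp
  also have "\<dots> \<longleftrightarrow> (\<exists>z. z 0 1 = v \<and> cone_tree n (cone_leaf a b u v t) z)"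
    using uvt cone_leaf_nonneg[OF uvt] by (intro power_le_prod_iff_cone_tree)
  also have "\<dots> \<longleftrightarrow> (\<exists>z. soc_system (Suc n) a b u v t z)"
  proof
    assume "\<exists>z. z 0 1 = v \<and> cone_tree n (cone_leaf a b u v t) z"
    then show "\<exists>z. soc_system (Suc n) a b u v t z"
      using cone_tree_imp_soc_system[OF n ab(1,2) uvt] by blast
  next
    assume "\<exists>z. soc_system (Suc n) a b u v t z"
    then obtain z where "soc_system (Suc n) a b u v t z" ..
    then have "cone_tree n (cone_leaf a b u v t) (z(0 := (\<lambda>_. v)))"
      using soc_system_imp_cone_tree[OF n ab(1,2)] by blast
    then show "\<exists>z. z 0 1 = v \<and> cone_tree n (cone_leaf a b u v t) z"
      by (intro exI[of _ "z(0 := (\<lambda>_. v))"]) simp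
  qed
  finally show ?thesis
    using uvt by blast
next
  case False
  then show ?thesis
    by (auto simp: soc_system_def)
qed

lemma exponent_as_ratio:
  fixes p :: real
  assumes p: "2 < p" and ratio: "1 / p = real a / real b"
  shows "0 < a" "2*a < b" "p = real b / real a"
proof -
  have "real a / real b \<noteq> 0"
    using p ratio by (metis divide_eq_0_iff one_neq_zero not_numeral_less_zero order.asym)
  then have "a \<noteq> 0" "b \<noteq> 0"
    by auto
  then show p_eq: "p = real b / real a"
    using ratio p by (simp add: field_simps)
  show "0 < a"
    using \<open>a \<noteq> 0\<close> by simp
  have "2 * real a < p * real a"
    using p \<open>a \<noteq> 0\<close> by simp
  also have "\<dots> = real b"
    using p_eq \<open>a \<noteq> 0\<close> by simp
  finally show "2*a < b"
    by linarith
qed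

lemma le_two_power_nat_ceiling_log:
  fixes x :: real
  assumes "1 \<le> x"
  shows "x \<le> 2 ^ nat \<lceil>log 2 x\<rceil>"
proof -
  have "log 2 x \<le> real (nat \<lceil>log 2 x\<rceil>)"
    using assms by linarith
  then have "x \<le> 2 powr real (nat \<lceil>log 2 x\<rceil>)"
    using assms by (subst log_le_iff[symmetric]) auto
  also have "\<dots> = 2 ^ nat \<lceil>log 2 x\<rceil>"
    by (rule powr_realpow) simp
  finally show ?thesis .
qed

lemma depth_of_nat_ceiling_log:
  assumes b: "3 \<le> b" and k: "k = nat \<lceil>log 2 (real b + 1)\<rceil>"
  obtains n where "k = Suc n" "0 < n" "b \<le> 2 * 2^n"
proof -
  have "real (b + 1) \<le> real (2^k)"
    unfolding k using le_two_power_nat_ceiling_log[of "real b + 1"] by simp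
  then have bk: "b + 1 \<le> 2^k"
    by (simp only: of_nat_le_iff)
  have "2 \<le> k"
  proof (rule ccontr)
    assume "\<not> 2 \<le> k"
    then have "(2::nat)^k \<le> 2"
      using power_increasing[of k 1 "2::nat"] by simp
    then show False
      using bk b by linarith
  qed
  then show ?thesis
    using bk by (intro that[of "k - 1"]) (auto simp flip: power_Suc)
qed

theorem proposition3p6:
  fixes p :: real and a b k :: nat
  assumes "p \<in> \<rat>" and "p > 2"
    and "coprime a b" and "1 / p = real a / real b"
    and "k = nat \<lceil>log 2 (real b + 1)\<rceil>"
  shows "{(u, v, t). u \<ge> 0 \<and> v \<ge> 0 \<and> t \<ge> 0 \<and>
            v powr (p / (p - 2)) \<le> t * u powr (2 / (p - 2))}
       = {(u, v, t). \<exists>z :: nat \<Rightarrow> nat \<Rightarrow> real.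
            norm (v, (z 1 1 - z 1 2) / 2) \<le> (z 1 1 + z 1 2) / 2
          \<and> (\<forall>i\<in>{1..k-2}. \<forall>j\<in>{1..2^i}.
               norm (z i j, (z (i+1) (2*j-1) - z (i+1) (2*j)) / 2)
                 \<le> (z (i+1) (2*j-1) + z (i+1) (2*j)) / 2)
          \<and> (\<forall>j\<in>{1..a}. z (k-1) j \<le> u)
          \<and> (\<forall>j\<in>{a+1..b div 2}. z (k-1) j \<le> t)
          \<and> (\<forall>j\<in>{b div 2 + 1..(b+1) div 2}. norm (z (k-1) j, (t - v) / 2) \<le> (t + v) / 2)
          \<and> (\<forall>j\<in>{(b+1) div 2 + 1..2^(k-1)}. z (k-1) j \<le> v)
          \<and> (\<forall>i\<in>{1..k-1}. \<forall>j\<in>{1..2^i}. z i j \<ge> 0)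
          \<and> u \<ge> 0 \<and> v \<ge> 0 \<and> t \<ge> 0}"
proof -
  have a_pos: "0 < a" and ab: "2*a < b" and p: "p = real b / real a"
    using exponent_as_ratio[OF assms(2,4)] by auto
  then have "3 \<le> b" "2*a \<le> b" "0 < b"
    by linarith+
  then obtain n where k: "k = Suc n" and n: "0 < n" and bn: "b \<le> 2 * 2^n"
    using depth_of_nat_ceiling_log[OF _ assms(5)] by blast
  have cone_iff: "(0 \<le> u \<and> 0 \<le> v \<and> 0 \<le> t \<and> v powr (p / (p - 2)) \<le> t * u powr (2 / (p - 2)))
      \<longleftrightarrow> (\<exists>z. soc_system k a b u v t z)" for u v t
    unfolding k exists_soc_system_iff[OF n \<open>2*a \<le> b\<close> bn \<open>0 < b\<close>]
    using powr_cone_iff_monomial_le[OF _ _ _ a_pos ab p, of u v t] by blast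
  show ?thesis
    by (simp only: cone_iff soc_system_def)
qed

end
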